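(* For every $n\ge 2$, there exists no matching mechanism that is resolute, symmetric (i.e. $G^*$-symmetric) and minimally optimal.
   Context: Fix $n\ge 2$, $W=\{1,\dots,n\}$ (women), $M=\{n+1,\dots,2n\}$ (men), $I=W\cup M$. Permutations compose right-to-left. A preference profile is a function $p$ on $I$ assigning to each $x\in W$ a linear order $p(x)$ on $M$ and to each $y\in M$ a linear order $p(y)$ on $W$; $\mathcal{P}$ is the set of preference profiles. For a linear order $R$ on a set $X$ and $a\in X$, $\mathrm{Rank}_R(a)=|\{b\in X: b\succeq_R a\}|$. A matching is a permutation $\mu$ of $I$ with $\mu(W)=M$, $\mu(M)=W$ and $\mu(\mu(z))=z$ for all $z\in I$; $\mathcal{M}$ is the set of matchings. $\mu$ is minimally optimal for $p$ if there is $z\in I$ with $\mathrm{Rank}_{p(z)}(\mu(z))<n$. Let $G^*=\{\varphi\in\mathrm{Sym}(I):\{\varphi(W),\varphi(M)\}=\{W,M\}\}$. For a linear order $R$ on $X\subseteq I$ and $\varphi\in\mathrm{Sym}(I)$, $\varphi R$ is the relation on $\varphi(X)$ with $(a,b)\in\varphi R$ iff $(\varphi^{-1}(a),\varphi^{-1}(b))\in R$. For $p\in\mathcal{P}$, $\varphi\in G^*$, $p^\varphi(z)=\varphi\,p(\varphi^{-1}(z))$. For a permutation $\mu$, $\mu^\varphi=\varphi\mu\varphi^{-1}$; $S^\varphi=\{\mu^\varphi:\mu\in S\}$. A matching mechanism is a correspondence $F$ from $\mathcal{P}$ to $\mathcal{M}$; it is resolute if $|F(p)|=1$ for all $p$;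 minimally optimal if every $\mu\in F(p)$ is minimally optimal for $p$, for all $p$; symmetric if $F(p^\varphi)=F(p)^\varphi$ for all $p\in\mathcal{P}$, $\varphi\in G^*$. *)

theory Defs
  imports "HOL-Combinatorics.Permutations"
begin

text \<open>A linear order R on X is a relation with (a,b) \<in> R meaning a is weakly preferred to b.\<close>

definition Wom :: "nat \<Rightarrow> nat set" where "Wom n = {1..n}"
definition Men :: "nat \<Rightarrow> nat set" where "Men n = {n+1..2*n}"
definition Ag :: "nat \<Rightarrow> nat set" where "Ag n = Wom n \<union> Men n"

definition Rank :: "nat set \<Rightarrow> (nat \<times> nat) set \<Rightarrow> nat \<Rightarrow> nat" where
  "Rank X R a = card {b \<in> X. (b, a) \<in> R}"

definition profiles :: "nat \<Rightarrow> (nat \<Rightarrow> (nat \<times> nat) set) set" where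
  "profiles n = {p. (\<forall>x\<in>Wom n. linear_order_on (Men n) (p x))
                  \<and> (\<forall>y\<in>Men n. linear_order_on (Wom n) (p y))
                  \<and> (\<forall>z. z \<notin> Ag n \<longrightarrow> p z = {})}"

definition matchings :: "nat \<Rightarrow> (nat \<Rightarrow> nat) set" where
  "matchings n = {\<mu>. \<mu> permutes Ag n \<and> \<mu> ` Wom n = Men n \<and> \<mu> ` Men n = Wom n
                     \<and> (\<forall>z\<in>Ag n. \<mu> (\<mu> z) = z)}"

definition opp :: "nat \<Rightarrow> nat \<Rightarrow> nat set" where
  "opp n z = (if z \<in> Wom n then Men n else Wom n)"

definition min_optimal :: "nat \<Rightarrow> (nat \<Rightarrow> (nat \<times> nat) set) \<Rightarrow> (nat \<Rightarrow> nat) \<Rightarrow> bool" where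
  "min_optimal n p \<mu> \<longleftrightarrow> (\<exists>z\<in>Ag n. Rank (opp n z) (p z) (\<mu> z) < n)"

definition Gstar :: "nat \<Rightarrow> (nat \<Rightarrow> nat) set" where
  "Gstar n = {\<phi>. \<phi> permutes Ag n \<and> {\<phi> ` Wom n, \<phi> ` Men n} = {Wom n, Men n}}"

definition rel_act :: "(nat \<Rightarrow> nat) \<Rightarrow> (nat \<times> nat) set \<Rightarrow> (nat \<times> nat) set" where
  "rel_act \<phi> R = {(\<phi> a, \<phi> b) | a b. (a, b) \<in> R}"

definition prof_act :: "(nat \<Rightarrow> (nat \<times> nat) set) \<Rightarrow> (nat \<Rightarrow> nat) \<Rightarrow> (nat \<Rightarrow> (nat \<times> nat) set)" where
  "prof_act p \<phi> = (\<lambda>z. rel_act \<phi> (p (inv \<phi> z)))"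

definition perm_act :: "(nat \<Rightarrow> nat) \<Rightarrow> (nat \<Rightarrow> nat) \<Rightarrow> (nat \<Rightarrow> nat)" where
  "perm_act \<mu> \<phi> = \<phi> \<circ> \<mu> \<circ> inv \<phi>"

definition mechanism :: "nat \<Rightarrow> ((nat \<Rightarrow> (nat \<times> nat) set) \<Rightarrow> (nat \<Rightarrow> nat) set) \<Rightarrow> bool" where
  "mechanism n F \<longleftrightarrow> (\<forall>p\<in>profiles n. F p \<subseteq> matchings n)"

definition resolute :: "nat \<Rightarrow> ((nat \<Rightarrow> (nat \<times> nat) set) \<Rightarrow> (nat \<Rightarrow> nat) set) \<Rightarrow> bool" where
  "resolute n F \<longleftrightarrow> (\<forall>p\<in>profiles n. card (F p) = 1)"

definition mech_min_optimal :: "nat \<Rightarrow> ((nat \<Rightarrow> (nat \<times> nat) set) \<Rightarrow> (nat \<Rightarrow> nat) set) \<Rightarrow> bool" where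
  "mech_min_optimal n F \<longleftrightarrow> (\<forall>p\<in>profiles n. \<forall>\<mu>\<in>F p. min_optimal n p \<mu>)"

definition symmetric :: "nat \<Rightarrow> ((nat \<Rightarrow> (nat \<times> nat) set) \<Rightarrow> (nat \<Rightarrow> nat) set) \<Rightarrow> bool" where
  "symmetric n F \<longleftrightarrow> (\<forall>p\<in>profiles n. \<forall>\<phi>\<in>Gstar n.
       F (prof_act p \<phi>) = (\<lambda>\<mu>. perm_act \<mu> \<phi>) ` F p)"

end

(*
  Seat the 2n agents around a round table, alternating women and men, and let every agent
  rank the agents of the opposite sex by their clockwise distance from the seat opposite
  to their own, so that whoever sits exactly opposite is ranked last. Rotating the table by
  one seat lies in G* and fixes this profile, so a resolute symmetric mechanism must choose
  a matching that commutes with the rotation, i.e. shifts every seat by the same amount D.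
  Being an involution without fixed points, the matching has D = n: everybody is matched
  to the agent sitting opposite, whom they rank last, so it is not minimally optimal.
*)
theory Submission
  imports Defs
begin

definition pref_of_key :: "nat set \<Rightarrow> (nat \<Rightarrow> 'a::linorder) \<Rightarrow> (nat \<times> nat) set" where
  "pref_of_key X f = {(a, b). a \<in> X \<and> b \<in> X \<and> f b \<le> f a}"

lemma linear_order_on_pref_of_key:
  assumes "inj_on f X"
  shows "linear_order_on X (pref_of_key X f)"
  using assms
  unfolding pref_of_key_def linear_order_on_def partial_order_on_def preorder_on_def
    refl_on_def trans_on_def antisym_on_def total_on_def
  by (auto dest: inj_onD)

lemma Rank_pref_of_key_least:
  assumes "a \<in> X" "\<forall>b\<in>X. f a \<le> f b"
  shows "Rank X (pref_of_key X f) a = card X"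
proof -
  have "{b \<in> X. (b, a) \<in> pref_of_key X f} = X"
    using assms by (auto simp: pref_of_key_def)
  then show ?thesis
    by (simp add: Rank_def)
qed

lemma rel_act_pref_of_key:
  assumes "\<forall>a\<in>X. g (\<phi> a) = f a"
  shows "rel_act \<phi> (pref_of_key X f) = pref_of_key (\<phi> ` X) g"
  using assms unfolding rel_act_def pref_of_key_def by (auto 0 4)

lemma prof_act_eq_self:
  assumes perm: "\<phi> permutes A" and outside: "\<forall>z. z \<notin> A \<longrightarrow> p z = {}"
    and equivariant: "\<forall>y\<in>A. rel_act \<phi> (p y) = p (\<phi> y)"
  shows "prof_act p \<phi> = p"
proof
  fix z
  show "prof_act p \<phi> z = p z"
  proof (cases "z \<in> A")
    case True
    then have "inv \<phi> z \<in> A"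
      using permutes_in_image[OF permutes_inv[OF perm]] by simp
    then show ?thesis
      using equivariant permutes_inverses(1)[OF perm] by (simp add: prof_act_def)
  next
    case False
    then show ?thesis
      using outside permutes_not_in[OF permutes_inv[OF perm]] by (simp add: prof_act_def rel_act_def)
  qed
qed

lemma resolute_symmetric_commutes:
  assumes "resolute n F" "symmetric n F" "p \<in> profiles n" "\<phi> \<in> Gstar n"
    and fixed: "prof_act p \<phi> = p" and "\<mu> \<in> F p"
  shows "\<mu> \<circ> \<phi> = \<phi> \<circ> \<mu>"
proof -
  have "F p = {\<mu>}"
    using assms(1,3,6) unfolding resolute_def by (metis card_1_singletonE singletonD)
  moreover have "F p = (\<lambda>\<mu>. perm_act \<mu> \<phi>) ` F p"
    using assms(2-4) fixed unfolding symmetric_def by metis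
  ultimately have "\<phi> \<circ> \<mu> \<circ> inv \<phi> = \<mu>"
    by (simp add: perm_act_def)
  moreover have "inv \<phi> \<circ> \<phi> = id"
    using assms(4) permutes_inv_o(2) unfolding Gstar_def by blast
  ultimately show ?thesis
    by (metis comp_assoc comp_id)
qed

lemma shift_if_commutes_Suc_mod:
  fixes g :: "nat \<Rightarrow> nat"
  assumes "\<forall>k<m. g k < m" and "\<forall>k<m. g (Suc k mod m) = Suc (g k) mod m" and "k < m"
  shows "g k = (g 0 + k) mod m"
  using assms(3)
proof (induction k)
  case 0
  then show ?case
    using assms(1) by simp
next
  case (Suc k)
  then have "g (Suc k) = Suc (g k) mod m"
    using assms(2) by (metis Suc_lessD mod_less)
  then show ?case
    using Suc by (simp add: mod_Suc_eq)
qed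

lemma add_self_mod_eq_0_cases:
  fixes d m :: nat
  assumes "d < m" "(d + d) mod m = 0"
  shows "d = 0 \<or> d + d = m"
proof -
  obtain q where q: "d + d = m * q"
    using assms(2) by blast
  moreover have "d + d < m * 2"
    using assms(1) by simp
  ultimately have "q < 2"
    by simp
  then show ?thesis
    using q by (cases q) auto
qed

lemma Wom_Men_disjoint: "Wom n \<inter> Men n = {}"
  by (auto simp: Wom_def Men_def)

lemma pos_if_mem_Ag: "z \<in> Ag n \<Longrightarrow> 0 < n"
  by (auto simp: Ag_def Wom_def Men_def)

lemma card_opp: "card (opp n z) = n"
  by (simp add: opp_def Wom_def Men_def)

lemma opp_Wom [simp]: "z \<in> Wom n \<Longrightarrow> opp n z = Men n"
  by (simp add: opp_def)

lemma opp_Men [simp]: "z \<in> Men n \<Longrightarrow> opp n z = Wom n"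
  using Wom_Men_disjoint by (auto simp: opp_def)

lemma opp_subset_Ag: "opp n z \<subseteq> Ag n"
  by (simp add: opp_def Ag_def)

lemma matching_partner_in_opp:
  assumes "\<mu> \<in> matchings n" "z \<in> Ag n"
  shows "\<mu> z \<in> opp n z"
  using assms Wom_Men_disjoint unfolding matchings_def opp_def Ag_def by auto

(* Woman i sits at seat 2i - 2 and man n + j at seat 2j - 1 of the seats 0, ..., 2n - 1. *)
definition seat :: "nat \<Rightarrow> nat \<Rightarrow> nat" where
  "seat n z = (if z \<le> n then 2 * z - 2 else 2 * (z - n) - 1)"

definition occupant :: "nat \<Rightarrow> nat \<Rightarrow> nat" where
  "occupant n k = (if even k then k div 2 + 1 else n + (k + 1) div 2)"

lemma seat_less: "z \<in> Ag n \<Longrightarrow> seat n z < 2 * n"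
  by (auto simp: seat_def Ag_def Wom_def Men_def)

lemma occupant_seat: "z \<in> Ag n \<Longrightarrow> occupant n (seat n z) = z"
  by (auto simp: seat_def occupant_def Ag_def Wom_def Men_def)

lemma seat_occupant: "k < 2 * n \<Longrightarrow> seat n (occupant n k) = k"
  by (auto simp: seat_def occupant_def)

lemma occupant_in_Ag: "k < 2 * n \<Longrightarrow> occupant n k \<in> Ag n"
  by (auto simp: occupant_def Ag_def Wom_def Men_def)

lemma even_seat_iff: "z \<in> Ag n \<Longrightarrow> even (seat n z) \<longleftrightarrow> z \<in> Wom n"
  by (auto simp: seat_def Ag_def Wom_def Men_def)

lemma inj_on_seat: "inj_on (seat n) (Ag n)"
  by (metis inj_on_inverseI occupant_seat)

definition rotation :: "nat \<Rightarrow> nat \<Rightarrow> nat" where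
  "rotation n z = (if z \<in> Ag n then occupant n (Suc (seat n z) mod (2 * n)) else z)"

lemma rotation_in_Ag: "z \<in> Ag n \<Longrightarrow> rotation n z \<in> Ag n"
  using seat_less[of z n] by (simp add: rotation_def occupant_in_Ag)

lemma seat_rotation: "z \<in> Ag n \<Longrightarrow> seat n (rotation n z) = Suc (seat n z) mod (2 * n)"
  using seat_less[of z n] by (simp add: rotation_def seat_occupant)

lemma rotation_occupant: "k < 2 * n \<Longrightarrow> rotation n (occupant n k) = occupant n (Suc k mod (2 * n))"
  by (simp add: rotation_def occupant_in_Ag seat_occupant)

lemma rotation_in_Wom_iff: "z \<in> Ag n \<Longrightarrow> rotation n z \<in> Wom n \<longleftrightarrow> z \<in> Men n"
proof -
  assume z: "z \<in> Ag n"
  have "rotation n z \<in> Wom n \<longleftrightarrow> even (Suc (seat n z) mod (2 * n))"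
    using even_seat_iff rotation_in_Ag seat_rotation z by metis
  also have "\<dots> \<longleftrightarrow> z \<notin> Wom n"
    using even_seat_iff z by (simp add: dvd_mod_iff)
  also have "\<dots> \<longleftrightarrow> z \<in> Men n"
    using z Wom_Men_disjoint by (auto simp: Ag_def)
  finally show ?thesis .
qed

lemma inj_on_Suc_mod: "inj_on (\<lambda>k. Suc k mod m) {..<m}"
  by (auto simp: inj_on_def mod_Suc split: if_splits)

lemma rotation_permutes: "rotation n permutes Ag n"
proof (rule bij_imp_permutes)
  have "inj_on (rotation n) (Ag n)"
  proof (rule inj_onI)
    fix a b assume a: "a \<in> Ag n" and b: "b \<in> Ag n" and eq: "rotation n a = rotation n b"
    then have "Suc (seat n a) mod (2 * n) = Suc (seat n b) mod (2 * n)"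
      by (metis seat_rotation)
    then have "seat n a = seat n b"
      using inj_on_Suc_mod[of "2 * n"] seat_less a b by (auto dest: inj_onD)
    then show "a = b"
      using inj_on_seat a b by (auto dest: inj_onD)
  qed
  moreover have "rotation n ` Ag n = Ag n"
  proof (rule endo_inj_surj[OF _ _ calculation])
    show "finite (Ag n)"
      by (simp add: Ag_def Wom_def Men_def)
    show "rotation n ` Ag n \<subseteq> Ag n"
      using rotation_in_Ag by blast
  qed
  ultimately show "bij_betw (rotation n) (Ag n) (Ag n)"
    by (simp add: bij_betw_def)
  show "\<And>z. z \<notin> Ag n \<Longrightarrow> rotation n z = z"
    by (simp add: rotation_def)
qed

lemma rotation_image_Wom: "rotation n ` Wom n = Men n"
  and rotation_image_Men: "rotation n ` Men n = Wom n"
proof -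
  have "rotation n ` Wom n \<union> rotation n ` Men n = Wom n \<union> Men n"
    using permutes_image[OF rotation_permutes] by (simp add: Ag_def image_Un)
  moreover have "rotation n ` Wom n \<subseteq> Men n" "rotation n ` Men n \<subseteq> Wom n"
    using rotation_in_Wom_iff rotation_in_Ag Wom_Men_disjoint by (fastforce simp: Ag_def)+
  ultimately show "rotation n ` Wom n = Men n" "rotation n ` Men n = Wom n"
    using Wom_Men_disjoint by blast+
qed

lemma rotation_in_Gstar: "rotation n \<in> Gstar n"
  using rotation_permutes rotation_image_Wom rotation_image_Men by (auto simp: Gstar_def)

lemma rotation_image_opp: "z \<in> Ag n \<Longrightarrow> rotation n ` opp n z = opp n (rotation n z)"
  using rotation_in_Wom_iff[of z n] rotation_image_Wom rotation_image_Men Wom_Men_disjoint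
  by (auto simp: opp_def Ag_def disjoint_iff)

definition pref_key :: "nat \<Rightarrow> nat \<Rightarrow> nat \<Rightarrow> int" where
  "pref_key n z a = (int (seat n a) - int (seat n z) + int n) mod (2 * int n)"

definition round_table_profile :: "nat \<Rightarrow> nat \<Rightarrow> (nat \<times> nat) set" where
  "round_table_profile n z =
     (if z \<in> Ag n then pref_of_key (opp n z) (pref_key n z) else {})"

lemma inj_on_pref_key: "inj_on (pref_key n z) (Ag n)"
proof (rule inj_onI)
  fix a b assume a: "a \<in> Ag n" and b: "b \<in> Ag n" and eq: "pref_key n z a = pref_key n z b"
  then have "int (seat n a) mod (2 * int n) = int (seat n b) mod (2 * int n)"
    unfolding pref_key_def by (simp add: mod_eq_dvd_iff)
  then have "seat n a = seat n b"
    using seat_less[OF a] seat_less[OF b] by simp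
  then show "a = b"
    using inj_on_seat a b by (auto dest: inj_onD)
qed

lemma round_table_profile_in_profiles: "round_table_profile n \<in> profiles n"
proof -
  have lin: "linear_order_on (opp n z) (round_table_profile n z)" if "z \<in> Ag n" for z
    using that linear_order_on_pref_of_key[OF inj_on_subset[OF inj_on_pref_key opp_subset_Ag]]
    by (simp add: round_table_profile_def)
  show ?thesis
    unfolding profiles_def
  proof (intro CollectI conjI ballI allI impI)
    show "linear_order_on (Men n) (round_table_profile n x)" if "x \<in> Wom n" for x
      using that lin[of x] by (simp add: Ag_def)
    show "linear_order_on (Wom n) (round_table_profile n y)" if "y \<in> Men n" for y
      using that lin[of y] by (simp add: Ag_def)
    show "round_table_profile n z = {}" if "z \<notin> Ag n" for z
      using that by (simp add: round_table_profile_def)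
  qed
qed

lemma pref_key_rotation:
  assumes "z \<in> Ag n" "a \<in> Ag n"
  shows "pref_key n (rotation n z) (rotation n a) = pref_key n z a"
proof -
  let ?m = "2 * int n"
  have seat: "int (seat n (rotation n x)) mod ?m = (int (seat n x) + 1) mod ?m"
    if "x \<in> Ag n" for x
    using seat_rotation[OF that] by (simp add: of_nat_mod ac_simps)
  have "pref_key n (rotation n z) (rotation n a)
      = ((int (seat n a) + 1) - (int (seat n z) + 1) + int n) mod ?m"
    unfolding pref_key_def using seat assms by (intro mod_add_cong mod_diff_cong) simp_all
  then show ?thesis
    by (simp add: pref_key_def)
qed

lemma prof_act_rotation_round_table_profile:
  "prof_act (round_table_profile n) (rotation n) = round_table_profile n"
proof (rule prof_act_eq_self[OF rotation_permutes])
  show "\<forall>z. z \<notin> Ag n \<longrightarrow> round_table_profile n z = {}"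
    by (simp add: round_table_profile_def)
  show "\<forall>y\<in>Ag n. rel_act (rotation n) (round_table_profile n y) = round_table_profile n (rotation n y)"
  proof
    fix y assume y: "y \<in> Ag n"
    have "rel_act (rotation n) (pref_of_key (opp n y) (pref_key n y))
        = pref_of_key (rotation n ` opp n y) (pref_key n (rotation n y))"
      using pref_key_rotation[OF y] opp_subset_Ag by (intro rel_act_pref_of_key) blast
    then show "rel_act (rotation n) (round_table_profile n y) = round_table_profile n (rotation n y)"
      using y rotation_in_Ag[OF y] by (simp add: round_table_profile_def rotation_image_opp)
  qed
qed

lemma seat_commuting_with_rotation:
  assumes maps: "\<forall>x\<in>Ag n. \<mu> x \<in> Ag n" and comm: "\<mu> \<circ> rotation n = rotation n \<circ> \<mu>"
    and z: "z \<in> Ag n"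
  shows "seat n (\<mu> z) = (seat n (\<mu> (occupant n 0)) + seat n z) mod (2 * n)"
proof -
  define g where "g k = seat n (\<mu> (occupant n k))" for k
  have "\<forall>k<2 * n. g k < 2 * n"
    using maps occupant_in_Ag seat_less by (simp add: g_def)
  moreover have "\<forall>k<2 * n. g (Suc k mod (2 * n)) = Suc (g k) mod (2 * n)"
  proof (intro allI impI)
    fix k assume k: "k < 2 * n"
    have "g (Suc k mod (2 * n)) = seat n (\<mu> (rotation n (occupant n k)))"
      by (simp add: g_def rotation_occupant k)
    also have "\<dots> = seat n (rotation n (\<mu> (occupant n k)))"
      using comm by (metis comp_apply)
    also have "\<dots> = Suc (g k) mod (2 * n)"
      using maps occupant_in_Ag[OF k] by (simp add: seat_rotation g_def)
    finally show "g (Suc k mod (2 * n)) = Suc (g k) mod (2 * n)" .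
  qed
  ultimately have "g (seat n z) = (g 0 + seat n z) mod (2 * n)"
    using shift_if_commutes_Suc_mod seat_less[OF z] by blast
  then show ?thesis
    using occupant_seat[OF z] by (simp add: g_def)
qed

lemma commuting_matching_antipodal:
  assumes "\<mu> \<in> matchings n" and comm: "\<mu> \<circ> rotation n = rotation n \<circ> \<mu>" and "z \<in> Ag n"
  shows "seat n (\<mu> z) = (n + seat n z) mod (2 * n)"
proof -
  have perm: "\<mu> permutes Ag n" and to_Men: "\<mu> ` Wom n = Men n"
    and involution: "\<forall>x\<in>Ag n. \<mu> (\<mu> x) = x"
    using assms(1) unfolding matchings_def by auto
  have maps: "\<forall>x\<in>Ag n. \<mu> x \<in> Ag n"
    using permutes_in_image[OF perm] by blast
  let ?w = "occupant n 0"
  have w: "?w \<in> Wom n" "?w \<in> Ag n" "seat n ?w = 0"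
    using pos_if_mem_Ag[OF \<open>z \<in> Ag n\<close>] by (simp_all add: occupant_def Wom_def Ag_def seat_def)
  define D where "D = seat n (\<mu> ?w)"
  have shift: "seat n (\<mu> x) = (D + seat n x) mod (2 * n)" if "x \<in> Ag n" for x
    unfolding D_def using seat_commuting_with_rotation[OF maps comm that] .
  have "seat n (\<mu> (\<mu> ?w)) = (D + D) mod (2 * n)"
    using shift[of "\<mu> ?w"] maps w(2) by (simp add: D_def)
  then have "(D + D) mod (2 * n) = 0"
    using involution w by simp
  moreover have "D < 2 * n"
    unfolding D_def using maps w(2) by (simp add: seat_less)
  ultimately have "D = 0 \<or> D + D = 2 * n"
    by (rule add_self_mod_eq_0_cases[rotated])
  moreover have "D \<noteq> 0"
  proof
    assume "D = 0"
    then have same_seat: "seat n (\<mu> ?w) = seat n ?w"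
      using w(3) by (simp add: D_def)
    have "\<mu> ?w = ?w"
      using inj_onD[OF inj_on_seat same_seat] maps w(2) by blast
    then show False
      using to_Men w(1) Wom_Men_disjoint by (metis disjoint_iff imageI)
  qed
  ultimately have "D = n"
    by simp
  then show ?thesis
    using shift \<open>z \<in> Ag n\<close> by simp
qed

lemma antipodal_matching_not_min_optimal:
  assumes matching: "\<mu> \<in> matchings n"
    and antipodal: "\<forall>z\<in>Ag n. seat n (\<mu> z) = (n + seat n z) mod (2 * n)"
  shows "\<not> min_optimal n (round_table_profile n) \<mu>"
proof -
  have "Rank (opp n z) (round_table_profile n z) (\<mu> z) = n" if z: "z \<in> Ag n" for z
  proof -
    have "pref_key n z (\<mu> z) = ((int n + int (seat n z)) - int (seat n z) + int n) mod (2 * int n)"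
      unfolding pref_key_def using antipodal z
      by (intro mod_add_cong mod_diff_cong) (simp_all add: of_nat_mod)
    with pos_if_mem_Ag[OF z] have "\<forall>b\<in>opp n z. pref_key n z (\<mu> z) \<le> pref_key n z b"
      by (simp add: pref_key_def)
    then show ?thesis
      using Rank_pref_of_key_least[OF matching_partner_in_opp[OF matching z]] z
      by (simp add: round_table_profile_def card_opp)
  qed
  then show ?thesis
    by (simp add: min_optimal_def)
qed

theorem theorem5:
  fixes n :: nat
  assumes "n \<ge> 2"
  shows "\<not> (\<exists>F. mechanism n F \<and> resolute n F \<and> symmetric n F \<and> mech_min_optimal n F)"
proof
  assume "\<exists>F. mechanism n F \<and> resolute n F \<and> symmetric n F \<and> mech_min_optimal n F"
  then obtain F where mech: "mechanism n F" and res: "resolute n F" and sym: "symmetric n F"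
    and opt: "mech_min_optimal n F"
    by blast
  let ?p = "round_table_profile n"
  have p: "?p \<in> profiles n"
    by (rule round_table_profile_in_profiles)
  have "card (F ?p) = 1"
    using res p unfolding resolute_def by blast
  then obtain \<mu> where "F ?p = {\<mu>}"
    by (rule card_1_singletonE)
  then have \<mu>: "\<mu> \<in> F ?p"
    by simp
  have matching: "\<mu> \<in> matchings n"
    using mech p \<mu> unfolding mechanism_def by blast
  have "\<mu> \<circ> rotation n = rotation n \<circ> \<mu>"
    using resolute_symmetric_commutes[OF res sym p rotation_in_Gstar
        prof_act_rotation_round_table_profile \<mu>] .
  then have "\<not> min_optimal n ?p \<mu>"
    by (intro antipodal_matching_not_min_optimal[OF matching] ballI
        commuting_matching_antipodal[OF matching])
  then show False
    using opt p \<mu> unfolding mech_min_optimal_def by blast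
qed

end
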